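(* Let $n$ be even and $f:\mathbb{F}_{2^n}\to\mathbb{F}_{2^n}$ be an APN map with $f(0)=0$ such that every $y\in\mathrm{Im}(f)\setminus\{0\}$ has at least 3 preimages. Then $f$ is almost-3-to-1.
   Context: $f$ is APN if for every $a\neq 0$ and every $b$ the equation $f(x+a)+f(x)=b$ has at most 2 solutions. $f$ is almost-3-to-1 if there is a unique element of $\mathrm{Im}(f)$ with exactly one preimage and every other element of $\mathrm{Im}(f)$ has exactly 3 preimages. *)

theory Defs
  imports Main
begin

definition APN :: "('a::{finite,field} \<Rightarrow> 'a) \<Rightarrow> bool" where
  "APN f \<longleftrightarrow> (\<forall>a b. a \<noteq> 0 \<longrightarrow> card {x. f (x + a) + f x = b} \<le> 2)"

definition almost_3_to_1 :: "('a::finite \<Rightarrow> 'b) \<Rightarrow> bool" where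
  "almost_3_to_1 f \<longleftrightarrow>
     (\<exists>!y. y \<in> range f \<and> card (f -` {y}) = 1) \<and>
     (\<forall>y \<in> range f. card (f -` {y}) \<noteq> 1 \<longrightarrow> card (f -` {y}) = 3)"

end

theory Submission
  imports Defs "HOL-Number_Theory.Residues"
begin

text \<open>
  Write \<open>q = 2^n\<close> and \<open>N y = |f\<^sup>-\<^sup>1(y)|\<close>. In characteristic 2 the APN condition says
  that every shift \<open>a \<noteq> 0\<close> has at most two collisions \<open>f (x + a) = f x\<close>; counting
  the pairs \<open>(x, a)\<close> with \<open>a \<noteq> 0\<close> and \<open>f (x + a) = f x\<close> fibrewise gives
  \<open>\<Sum>y N y (N y - 1) \<le> 2 (q - 1)\<close>, while \<open>\<Sum>y N y = q\<close>. Rearranged, this reads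
  \<open>(N 0 - 1)(N 0 - 2) + \<Sum>y\<noteq>0 N y (N y - 3) \<le> 0\<close>, a sum of non-negative terms
  when all nonzero fibres have at least 3 elements. Hence they have exactly 3, and
  \<open>N 0 \<in> {1, 2}\<close>; since \<open>q = 4^(n/2) \<equiv> 1 (mod 3)\<close>, \<open>N 0 = 1\<close>.
\<close>

lemma CHAR_eq_2_if_card_power_two:
  assumes "card (UNIV :: 'a::{finite,field} set) = 2 ^ n"
  shows "CHAR('a) = 2"
proof -
  have "prime CHAR('a)"
    by (intro prime_CHAR_semidom finite_imp_CHAR_pos) simp
  moreover have "CHAR('a) dvd 2 ^ n"
    using CHAR_dvd_CARD assms by metis
  ultimately show ?thesis
    using prime_dvd_power primes_dvd_imp_eq two_is_prime_nat by blast
qed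

lemma sum_comp_eq_sum_card_vimage:
  fixes f :: "'a::finite \<Rightarrow> 'b" and h :: "'b \<Rightarrow> 'c::comm_semiring_1"
  shows "(\<Sum>x\<in>UNIV. h (f x)) = (\<Sum>y\<in>range f. of_nat (card (f -` {y})) * h y)"
proof -
  have "(\<Sum>x\<in>UNIV. h (f x)) = (\<Sum>y\<in>range f. \<Sum>x\<in>{x\<in>UNIV. f x = y}. h (f x))"
    by (rule sum.image_gen) simp
  also have "\<dots> = (\<Sum>y\<in>range f. of_nat (card (f -` {y})) * h y)"
    by (rule sum.cong) (auto simp: vimage_def)
  finally show ?thesis .
qed

lemma card_nonzero_shifts_same_value:
  fixes f :: "'a::{finite,ab_group_add} \<Rightarrow> 'b"
  shows "card {a. a \<noteq> 0 \<and> f (x + a) = f x} = card (f -` {f x}) - 1"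
proof -
  have "bij_betw (\<lambda>a. x + a) {a. a \<noteq> 0 \<and> f (x + a) = f x} (f -` {f x} - {x})"
    by (rule bij_betwI[where g = "\<lambda>z. z - x"]) auto
  then have "card {a. a \<noteq> 0 \<and> f (x + a) = f x} = card (f -` {f x} - {x})"
    by (rule bij_betw_same_card)
  then show ?thesis
    by (simp add: card_Diff_singleton)
qed

lemma sum_card_nonzero_shifts_same_value:
  fixes f :: "'a::{finite,ab_group_add} \<Rightarrow> 'b"
  shows "(\<Sum>x\<in>UNIV. card {a. a \<noteq> 0 \<and> f (x + a) = f x})
    = (\<Sum>y\<in>range f. card (f -` {y}) * (card (f -` {y}) - 1))"
  using sum_comp_eq_sum_card_vimage[of "\<lambda>y. card (f -` {y}) - 1" f]
  by (simp add: card_nonzero_shifts_same_value)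

lemma APN_collision_bound:
  fixes f :: "'a::{finite,field} \<Rightarrow> 'a"
  assumes "CHAR('a) = 2" and "APN f"
  shows "(\<Sum>y\<in>range f. card (f -` {y}) * (card (f -` {y}) - 1)) \<le> 2 * (card (UNIV :: 'a set) - 1)"
proof -
  have collisions: "card {x. f (x + a) = f x} \<le> 2" if "a \<noteq> 0" for a
  proof -
    have "{x. f (x + a) = f x} = {x. f (x + a) + f x = 0}"
      using minus_CHAR_2[OF assms(1)] by (metis eq_iff_diff_eq_0)
    with assms(2) that show ?thesis
      unfolding APN_def by simp
  qed
  have "(\<Sum>y\<in>range f. card (f -` {y}) * (card (f -` {y}) - 1))
      = (\<Sum>x\<in>UNIV. card {a. a \<noteq> 0 \<and> f (x + a) = f x})"
    by (rule sum_card_nonzero_shifts_same_value[symmetric])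
  also have "\<dots> = (\<Sum>a\<in>UNIV. card {x. a \<noteq> 0 \<and> f (x + a) = f x})"
    using sum.swap_restrict[of UNIV UNIV "\<lambda>_ _. 1::nat" "\<lambda>x a. a \<noteq> 0 \<and> f (x + a) = f x"]
    by simp
  also have "\<dots> \<le> (\<Sum>a::'a\<in>UNIV. if a = 0 then 0 else 2)"
    by (intro sum_mono) (simp add: collisions)
  also have "\<dots> = 2 * (card (UNIV :: 'a set) - 1)"
    by (simp add: sum.If_cases Compl_eq_Diff_UNIV card_Diff_singleton)
  finally show ?thesis .
qed

lemma fibre_sizes_forced_int:
  fixes g :: "'b \<Rightarrow> int"
  assumes "finite R" "z \<in> R" "g z \<ge> 1" "\<forall>y\<in>R - {z}. g y \<ge> 3"
    and "(\<Sum>y\<in>R. g y * (g y - 1)) \<le> 2 * (\<Sum>y\<in>R. g y) - 2"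
  shows "(\<forall>y\<in>R - {z}. g y = 3) \<and> (g z = 1 \<or> g z = 2)"
proof -
  have "(\<Sum>y\<in>R. g y * (g y - 1) - 2 * g y) \<le> -2"
    using assms(5) by (simp add: sum_subtractf sum_distrib_left)
  also have "(\<Sum>y\<in>R. g y * (g y - 1) - 2 * g y) = (\<Sum>y\<in>R. g y * (g y - 3))"
    by (simp add: algebra_simps)
  finally have "(g z - 1) * (g z - 2) + (\<Sum>y\<in>R - {z}. g y * (g y - 3)) \<le> 0"
    using assms(1,2) by (simp add: sum.remove algebra_simps)
  moreover have "0 \<le> (g z - 1) * (g z - 2)"
    using assms(3) by (cases "g z = 1") (auto intro: mult_nonneg_nonneg)
  moreover have terms_nonneg: "\<forall>y\<in>R - {z}. 0 \<le> g y * (g y - 3)"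
    using assms(4) by (intro ballI mult_nonneg_nonneg) force+
  moreover from this have "0 \<le> (\<Sum>y\<in>R - {z}. g y * (g y - 3))"
    by (intro sum_nonneg) simp
  ultimately have z_term: "(g z - 1) * (g z - 2) = 0"
    and sum_terms: "(\<Sum>y\<in>R - {z}. g y * (g y - 3)) = 0"
    by linarith+
  have "\<forall>y\<in>R - {z}. g y * (g y - 3) = 0"
  proof (subst sum_nonneg_eq_0_iff[symmetric])
    show "(\<Sum>y\<in>R - {z}. g y * (g y - 3)) = 0" by (fact sum_terms)
  qed (use assms(1) terms_nonneg in auto)
  with assms(4) have "\<forall>y\<in>R - {z}. g y = 3"
    by force
  moreover from z_term have "g z = 1 \<or> g z = 2"
    by auto
  ultimately show ?thesis ..
qed

lemma fibre_sizes_forced: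
  fixes N :: "'b \<Rightarrow> nat"
  assumes "finite R" "z \<in> R" "N z \<ge> 1" "\<forall>y\<in>R - {z}. N y \<ge> 3"
    and "(\<Sum>y\<in>R. N y * (N y - 1)) \<le> 2 * ((\<Sum>y\<in>R. N y) - 1)"
  shows "(\<forall>y\<in>R - {z}. N y = 3) \<and> (N z = 1 \<or> N z = 2)"
proof -
  have pos: "N y \<ge> 1" if "y \<in> R" for y
    using assms(3,4) that by (cases "y = z") force+
  have "N z \<le> (\<Sum>y\<in>R. N y)"
    using assms(1,2) by (intro member_le_sum) simp_all
  then have "int (\<Sum>y\<in>R. N y * (N y - 1)) \<le> 2 * (\<Sum>y\<in>R. int (N y)) - 2"
    using assms(3,5) by (simp add: of_nat_diff flip: of_nat_sum)
  moreover have "int (\<Sum>y\<in>R. N y * (N y - 1)) = (\<Sum>y\<in>R. int (N y) * (int (N y) - 1))"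
    unfolding of_nat_sum using pos by (intro sum.cong) simp_all
  ultimately have "(\<forall>y\<in>R - {z}. int (N y) = 3) \<and> (int (N z) = 1 \<or> int (N z) = 2)"
    using assms(1-4) by (intro fibre_sizes_forced_int) auto
  then show ?thesis
    by simp
qed

lemma power_four_mod_three: "(2::nat) ^ (2 * k) mod 3 = 1"
  by (simp add: power_mult power_mod[of 4, symmetric])

lemma almost_3_to_1I:
  assumes "z \<in> range f" and "card (f -` {z}) = 1"
    and "\<forall>y\<in>range f - {z}. card (f -` {y}) = 3"
  shows "almost_3_to_1 f"
  unfolding almost_3_to_1_def
proof (intro conjI ballI impI)
  show "\<exists>!y. y \<in> range f \<and> card (f -` {y}) = 1"
    using assms by (intro ex1I[of _ z]) force+
  show "card (f -` {y}) = 3" if "y \<in> range f" and "card (f -` {y}) \<noteq> 1" for y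
    using that assms(2,3) by force
qed

theorem proposition4p7:
  fixes f :: "'a::{finite,field} \<Rightarrow> 'a" and n :: nat
  assumes "card (UNIV :: 'a set) = 2 ^ n"
    and "even n"
    and "APN f"
    and "f 0 = 0"
    and "\<forall>y \<in> range f - {0}. card (f -` {y}) \<ge> 3"
  shows "almost_3_to_1 f"
proof -
  let ?N = "\<lambda>y. card (f -` {y})"
  have char_2: "CHAR('a) = 2"
    using assms(1) by (rule CHAR_eq_2_if_card_power_two)
  have total: "(\<Sum>y\<in>range f. ?N y) = card (UNIV :: 'a set)"
    using sum_comp_eq_sum_card_vimage[of "\<lambda>_. 1::nat" f] by simp
  have zero_in_range: "0 \<in> range f"
    using assms(4) by (metis rangeI)
  then have "?N 0 \<ge> 1"
    by (auto simp: Suc_le_eq card_gt_0_iff)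
  then have "(\<forall>y\<in>range f - {0}. ?N y = 3) \<and> (?N 0 = 1 \<or> ?N 0 = 2)"
    using zero_in_range assms(5)
  proof (intro fibre_sizes_forced)
    show "(\<Sum>y\<in>range f. ?N y * (?N y - 1)) \<le> 2 * ((\<Sum>y\<in>range f. ?N y) - 1)"
      unfolding total by (rule APN_collision_bound[OF char_2 assms(3)])
  qed simp_all
  then obtain three: "\<forall>y\<in>range f - {0}. ?N y = 3" and "?N 0 = 1 \<or> ?N 0 = 2"
    by blast
  have "card (UNIV :: 'a set) = ?N 0 + 3 * card (range f - {0})"
    using total zero_in_range three by (simp add: sum.remove)
  moreover have "card (UNIV :: 'a set) mod 3 = 1"
    using assms(1,2) power_four_mod_three by (metis evenE)
  ultimately have "?N 0 = 1"
    using \<open>?N 0 = 1 \<or> ?N 0 = 2\<close> by auto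
  then show ?thesis
    using zero_in_range three by (intro almost_3_to_1I)
qed

end
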